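(* Let $\Pi$ be a protocol and $\sigma,\sigma'\in\mathrm{br}(\Pi)$ be two sender best responses such that under each of $(\Pi,\sigma)$ and $(\Pi,\sigma')$ the game ends with probability $1$. Then $U^R(\Pi,\sigma)=U^R(\Pi,\sigma')$.
   Context: Setting. The state of nature is $\theta\in\Theta=\{H,L\}$ with prior $\Pr(\theta=H)=p\in(0,1)$. A sender privately observes $\theta$; a receiver does not. $S$ is a finite signal set; conditional on $\theta$, signals are i.i.d. with distribution $\pi_\theta$ on $S$, where $\pi_\theta(s)>0$ for all $s\in S,\theta\in\Theta$, and $\pi_H\neq\pi_L$. The receiver has a finite set of memory states $M$ and chooses a protocol $\Pi=(f,g,a)$: a transition function $f:M\times S\to\Delta(M)$ ($f(i,s)(j)$ is the probability of moving from memory state $i$ to $j$ after signal $s$), an initial distribution $g\in\Delta(M)$ of $m_0$, and an action rule $a:M\to[0,1]$ (probability of action $H$ if the game ends in that memory state). A sender strategy is $\sigma:M\times\Theta\to[0,1]$, the probability of stopping in the current memory state given $\theta$. Timing: $m_0\sim g$; in each period $t=0,1,\dots$, with current memory state $m_t$, the game ends if $m_t$ is absorbing ($f(m_t,s)(m_t)=1$ for all $s$); otherwise the sender stops with probability $\sigma(m_t,\theta)$, ending the game; if not stopped, a signal $s_t\sim\pi_\theta$ is generated and $m_{t+1}\sim f(m_t,s_t)$. When the game ends in state $m_t$ the receiver takes action $H$ with probability $a(m_t)$ and $L$ otherwise. The receiver's payoff is $1$ if the action equals $\theta$ and $0$ otherwise; the sender's payoff is $1$ if the action is $H$ and $0$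 otherwise; there is no discounting; if the game never ends both get $0$. $U^S(\Pi,\sigma),U^R(\Pi,\sigma)$ denote expected payoffs and $\mathrm{br}(\Pi)=\arg\sup_\sigma U^S(\Pi,\sigma)$ is the set of sender best responses. *)

theory Defs
  imports "HOL-Probability.Probability"
begin

datatype theta = H | L

text \<open>A protocol is (f, g, a): transitions f m s (a pmf on memory states),
  initial distribution g, action rule a (probability of action H).
  Signal distributions: pi theta. A sender strategy sigma m theta is the
  probability of stopping in memory state m given theta.\<close>

definition absorbing :: "('m \<Rightarrow> 's \<Rightarrow> 'm pmf) \<Rightarrow> 'm \<Rightarrow> bool" where
  "absorbing f m \<longleftrightarrow> (\<forall>s. pmf (f m s) m = 1)"

text \<open>Probability that the game ends in period t given current state m
  (conditional on reaching it).\<close>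
definition stop_prob :: "('m \<Rightarrow> 's \<Rightarrow> 'm pmf) \<Rightarrow> ('m \<Rightarrow> theta \<Rightarrow> real) \<Rightarrow> theta \<Rightarrow> 'm \<Rightarrow> real" where
  "stop_prob f \<sigma> \<theta> m = (if absorbing f m then 1 else \<sigma> m \<theta>)"

text \<open>alive_dist ... t m = probability (given theta) that the game has not ended
  before period t and m_t = m.\<close>
primrec alive_dist :: "(theta \<Rightarrow> 's::finite pmf) \<Rightarrow> ('m::finite \<Rightarrow> 's \<Rightarrow> 'm pmf) \<Rightarrow> 'm pmf
    \<Rightarrow> ('m \<Rightarrow> theta \<Rightarrow> real) \<Rightarrow> theta \<Rightarrow> nat \<Rightarrow> 'm \<Rightarrow> real" where
  "alive_dist \<pi> f g \<sigma> \<theta> 0 m = pmf g m"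
| "alive_dist \<pi> f g \<sigma> \<theta> (Suc t) m =
     (\<Sum>i\<in>UNIV. alive_dist \<pi> f g \<sigma> \<theta> t i * (1 - stop_prob f \<sigma> \<theta> i)
                  * (\<Sum>s\<in>UNIV. pmf (\<pi> \<theta>) s * pmf (f i s) m))"

definition end_prob :: "(theta \<Rightarrow> 's::finite pmf) \<Rightarrow> ('m::finite \<Rightarrow> 's \<Rightarrow> 'm pmf) \<Rightarrow> 'm pmf
    \<Rightarrow> ('m \<Rightarrow> theta \<Rightarrow> real) \<Rightarrow> theta \<Rightarrow> 'm \<Rightarrow> real" where
  "end_prob \<pi> f g \<sigma> \<theta> m = (\<Sum>t. alive_dist \<pi> f g \<sigma> \<theta> t m * stop_prob f \<sigma> \<theta> m)"

definition ends_surely :: "real \<Rightarrow> (theta \<Rightarrow> 's::finite pmf) \<Rightarrow> ('m::finite \<Rightarrow> 's \<Rightarrow> 'm pmf) \<Rightarrow> 'm pmf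
    \<Rightarrow> ('m \<Rightarrow> theta \<Rightarrow> real) \<Rightarrow> bool" where
  "ends_surely p \<pi> f g \<sigma> \<longleftrightarrow>
     p * (\<Sum>m\<in>UNIV. end_prob \<pi> f g \<sigma> H m) + (1 - p) * (\<Sum>m\<in>UNIV. end_prob \<pi> f g \<sigma> L m) = 1"

definition U_S :: "real \<Rightarrow> (theta \<Rightarrow> 's::finite pmf) \<Rightarrow> ('m::finite \<Rightarrow> 's \<Rightarrow> 'm pmf) \<Rightarrow> 'm pmf
    \<Rightarrow> ('m \<Rightarrow> real) \<Rightarrow> ('m \<Rightarrow> theta \<Rightarrow> real) \<Rightarrow> real" where
  "U_S p \<pi> f g a \<sigma> =
     p * (\<Sum>m\<in>UNIV. end_prob \<pi> f g \<sigma> H m * a m)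
   + (1 - p) * (\<Sum>m\<in>UNIV. end_prob \<pi> f g \<sigma> L m * a m)"

definition U_R :: "real \<Rightarrow> (theta \<Rightarrow> 's::finite pmf) \<Rightarrow> ('m::finite \<Rightarrow> 's \<Rightarrow> 'm pmf) \<Rightarrow> 'm pmf
    \<Rightarrow> ('m \<Rightarrow> real) \<Rightarrow> ('m \<Rightarrow> theta \<Rightarrow> real) \<Rightarrow> real" where
  "U_R p \<pi> f g a \<sigma> =
     p * (\<Sum>m\<in>UNIV. end_prob \<pi> f g \<sigma> H m * a m)
   + (1 - p) * (\<Sum>m\<in>UNIV. end_prob \<pi> f g \<sigma> L m * (1 - a m))"

definition valid_strategy :: "('m \<Rightarrow> theta \<Rightarrow> real) \<Rightarrow> bool" where
  "valid_strategy \<sigma> \<longleftrightarrow> (\<forall>m \<theta>. 0 \<le> \<sigma> m \<theta> \<and> \<sigma> m \<theta> \<le> 1)"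

definition br :: "real \<Rightarrow> (theta \<Rightarrow> 's::finite pmf) \<Rightarrow> ('m::finite \<Rightarrow> 's \<Rightarrow> 'm pmf) \<Rightarrow> 'm pmf
    \<Rightarrow> ('m \<Rightarrow> real) \<Rightarrow> ('m \<Rightarrow> theta \<Rightarrow> real) set" where
  "br p \<pi> f g a = {\<sigma>. valid_strategy \<sigma> \<and>
      (\<forall>\<sigma>'. valid_strategy \<sigma>' \<longrightarrow> U_S p \<pi> f g a \<sigma>' \<le> U_S p \<pi> f g a \<sigma>)}"

end

theory Submission
  imports Defs
begin

text \<open>The sender's payoff splits into an \<open>H\<close>-part and an \<open>L\<close>-part, and the
  part belonging to \<open>\<theta>\<close> depends only on the strategy \<open>\<sigma> (-) \<theta>\<close>. Splicing the
  \<open>H\<close>-half of one best response with the \<open>L\<close>-half of another therefore shows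
  that all best responses give the sender the same payoff in each state. If the
  game ends surely it ends surely in each state, so in state \<open>L\<close> the receiver is
  right exactly when the sender is not paid: both utilities are determined by
  the two state-wise sender payoffs.\<close>

definition sender_payoff ::
    "(theta \<Rightarrow> 's::finite pmf) \<Rightarrow> ('m::finite \<Rightarrow> 's \<Rightarrow> 'm pmf) \<Rightarrow> 'm pmf
      \<Rightarrow> ('m \<Rightarrow> real) \<Rightarrow> ('m \<Rightarrow> theta \<Rightarrow> real) \<Rightarrow> theta \<Rightarrow> real" where
  "sender_payoff \<pi> f g a \<sigma> \<theta> = (\<Sum>m\<in>UNIV. end_prob \<pi> f g \<sigma> \<theta> m * a m)"

definition end_mass ::
    "(theta \<Rightarrow> 's::finite pmf) \<Rightarrow> ('m::finite \<Rightarrow> 's \<Rightarrow> 'm pmf) \<Rightarrow> 'm pmf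
      \<Rightarrow> ('m \<Rightarrow> theta \<Rightarrow> real) \<Rightarrow> theta \<Rightarrow> real" where
  "end_mass \<pi> f g \<sigma> \<theta> = (\<Sum>m\<in>UNIV. end_prob \<pi> f g \<sigma> \<theta> m)"

definition splice_strategy ::
    "('m \<Rightarrow> theta \<Rightarrow> real) \<Rightarrow> ('m \<Rightarrow> theta \<Rightarrow> real) \<Rightarrow> 'm \<Rightarrow> theta \<Rightarrow> real" where
  "splice_strategy \<sigma>\<^sub>H \<sigma>\<^sub>L m \<theta> = (if \<theta> = H then \<sigma>\<^sub>H m H else \<sigma>\<^sub>L m L)"

lemma U_S_eq_sender_payoff:
  "U_S p \<pi> f g a \<sigma> = p * sender_payoff \<pi> f g a \<sigma> H + (1 - p) * sender_payoff \<pi> f g a \<sigma> L"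
  by (simp add: U_S_def sender_payoff_def)

lemma U_R_eq_sender_payoff:
  "U_R p \<pi> f g a \<sigma> = p * sender_payoff \<pi> f g a \<sigma> H
     + (1 - p) * (end_mass \<pi> f g \<sigma> L - sender_payoff \<pi> f g a \<sigma> L)"
  by (simp add: U_R_def sender_payoff_def end_mass_def right_diff_distrib sum_subtractf)

lemma valid_strategy_splice_strategy:
  "valid_strategy \<sigma>\<^sub>H \<Longrightarrow> valid_strategy \<sigma>\<^sub>L \<Longrightarrow> valid_strategy (splice_strategy \<sigma>\<^sub>H \<sigma>\<^sub>L)"
  by (simp add: valid_strategy_def splice_strategy_def)


lemma stop_prob_cong:
  "(\<And>m. \<sigma>\<^sub>1 m \<theta> = \<sigma>\<^sub>2 m \<theta>) \<Longrightarrow> stop_prob f \<sigma>\<^sub>1 \<theta> m = stop_prob f \<sigma>\<^sub>2 \<theta> m"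
  by (simp add: stop_prob_def)

lemma alive_dist_cong:
  assumes "\<And>m. \<sigma>\<^sub>1 m \<theta> = \<sigma>\<^sub>2 m \<theta>"
  shows "alive_dist \<pi> f g \<sigma>\<^sub>1 \<theta> t m = alive_dist \<pi> f g \<sigma>\<^sub>2 \<theta> t m"
  by (induction t arbitrary: m) (simp_all add: stop_prob_cong[of \<sigma>\<^sub>1 \<theta> \<sigma>\<^sub>2, OF assms])

lemma end_prob_cong:
  assumes "\<And>m. \<sigma>\<^sub>1 m \<theta> = \<sigma>\<^sub>2 m \<theta>"
  shows "end_prob \<pi> f g \<sigma>\<^sub>1 \<theta> m = end_prob \<pi> f g \<sigma>\<^sub>2 \<theta> m"
  by (simp add: end_prob_def alive_dist_cong[of \<sigma>\<^sub>1 \<theta> \<sigma>\<^sub>2, OF assms]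
      stop_prob_cong[of \<sigma>\<^sub>1 \<theta> \<sigma>\<^sub>2, OF assms])

lemma sender_payoff_splice_strategy:
  "sender_payoff \<pi> f g a (splice_strategy \<sigma>\<^sub>H \<sigma>\<^sub>L) H = sender_payoff \<pi> f g a \<sigma>\<^sub>H H"
  "sender_payoff \<pi> f g a (splice_strategy \<sigma>\<^sub>H \<sigma>\<^sub>L) L = sender_payoff \<pi> f g a \<sigma>\<^sub>L L"
  unfolding sender_payoff_def
  by (simp_all add: end_prob_cong[of "splice_strategy \<sigma>\<^sub>H \<sigma>\<^sub>L" _ \<sigma>\<^sub>H]
      end_prob_cong[of "splice_strategy \<sigma>\<^sub>H \<sigma>\<^sub>L" _ \<sigma>\<^sub>L] splice_strategy_def)

lemma sender_payoff_br_eq: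
  assumes p: "0 < p" "p < 1"
    and br: "\<sigma> \<in> br p \<pi> f g a" "\<sigma>' \<in> br p \<pi> f g a"
  shows "sender_payoff \<pi> f g a \<sigma> \<theta> = sender_payoff \<pi> f g a \<sigma>' \<theta>"
proof -
  let ?X = "\<lambda>\<sigma>. sender_payoff \<pi> f g a \<sigma> H" and ?Y = "\<lambda>\<sigma>. sender_payoff \<pi> f g a \<sigma> L"
  have valid: "valid_strategy \<sigma>" "valid_strategy \<sigma>'"
    and opt: "\<And>\<tau>. valid_strategy \<tau> \<Longrightarrow> U_S p \<pi> f g a \<tau> \<le> U_S p \<pi> f g a \<sigma>"
             "\<And>\<tau>. valid_strategy \<tau> \<Longrightarrow> U_S p \<pi> f g a \<tau> \<le> U_S p \<pi> f g a \<sigma>'"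
    using br by (auto simp: br_def)
  have "p * ?X \<sigma> + (1 - p) * ?Y \<sigma>' \<le> p * ?X \<sigma> + (1 - p) * ?Y \<sigma>"
    using opt(1)[OF valid_strategy_splice_strategy[OF valid]]
    by (simp add: U_S_eq_sender_payoff sender_payoff_splice_strategy)
  moreover have "p * ?X \<sigma>' + (1 - p) * ?Y \<sigma> \<le> p * ?X \<sigma>' + (1 - p) * ?Y \<sigma>'"
    using opt(2)[OF valid_strategy_splice_strategy[OF valid(2,1)]]
    by (simp add: U_S_eq_sender_payoff sender_payoff_splice_strategy)
  ultimately have Y: "?Y \<sigma> = ?Y \<sigma>'"
    using p by (simp add: mult_le_cancel_left_pos)
  moreover have "?X \<sigma> = ?X \<sigma>'"
    using opt(1)[OF valid(2)] opt(2)[OF valid(1)] p Y by (simp add: U_S_eq_sender_payoff)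
  ultimately show ?thesis
    by (cases \<theta>) simp_all
qed


lemma stop_prob_bounds:
  assumes "valid_strategy \<sigma>"
  shows "0 \<le> stop_prob f \<sigma> \<theta> m" "stop_prob f \<sigma> \<theta> m \<le> 1"
  using assms by (auto simp: stop_prob_def valid_strategy_def)

lemma alive_dist_nonneg:
  assumes "valid_strategy \<sigma>"
  shows "0 \<le> alive_dist \<pi> f g \<sigma> \<theta> t m"
  by (induction t arbitrary: m)
     (simp_all add: sum_nonneg stop_prob_bounds(2)[OF assms])

lemma sum_transition_eq_1:
  fixes \<pi> :: "theta \<Rightarrow> 's::finite pmf" and f :: "'m::finite \<Rightarrow> 's \<Rightarrow> 'm pmf"
  shows "(\<Sum>m\<in>UNIV. \<Sum>s\<in>UNIV. pmf (\<pi> \<theta>) s * pmf (f i s) m) = 1"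
proof -
  have "(\<Sum>m\<in>UNIV. \<Sum>s\<in>UNIV. pmf (\<pi> \<theta>) s * pmf (f i s) m)
      = (\<Sum>s\<in>UNIV. pmf (\<pi> \<theta>) s * (\<Sum>m\<in>UNIV. pmf (f i s) m))"
    by (subst sum.swap) (simp add: sum_distrib_left)
  then show ?thesis
    by (simp add: sum_pmf_eq_1)
qed

lemma sum_alive_dist_Suc:
  "(\<Sum>m\<in>UNIV. alive_dist \<pi> f g \<sigma> \<theta> (Suc t) m)
    = (\<Sum>m\<in>UNIV. alive_dist \<pi> f g \<sigma> \<theta> t m)
      - (\<Sum>m\<in>UNIV. alive_dist \<pi> f g \<sigma> \<theta> t m * stop_prob f \<sigma> \<theta> m)"
proof -
  have "(\<Sum>m\<in>UNIV. alive_dist \<pi> f g \<sigma> \<theta> (Suc t) m)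
     = (\<Sum>i\<in>UNIV. alive_dist \<pi> f g \<sigma> \<theta> t i * (1 - stop_prob f \<sigma> \<theta> i)
          * (\<Sum>m\<in>UNIV. \<Sum>s\<in>UNIV. pmf (\<pi> \<theta>) s * pmf (f i s) m))"
    by (simp only: alive_dist.simps, subst sum.swap) (simp add: sum_distrib_left)
  then show ?thesis
    by (simp add: sum_transition_eq_1 right_diff_distrib sum_subtractf)
qed

lemma sum_stopped_eq:
  "(\<Sum>t<n. \<Sum>m\<in>UNIV. alive_dist \<pi> f g \<sigma> \<theta> t m * stop_prob f \<sigma> \<theta> m)
      = 1 - (\<Sum>m\<in>UNIV. alive_dist \<pi> f g \<sigma> \<theta> n m)"
proof (induction n)
  case (Suc n)
  then show ?case
    using sum_alive_dist_Suc[of \<pi> f g \<sigma> \<theta> n] by simp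
qed (simp add: sum_pmf_eq_1)

lemma end_mass_le_1:
  assumes valid: "valid_strategy \<sigma>"
  shows "end_mass \<pi> f g \<sigma> \<theta> \<le> 1"
proof -
  define c where "c t m = alive_dist \<pi> f g \<sigma> \<theta> t m * stop_prob f \<sigma> \<theta> m" for t m
  have c_nonneg: "0 \<le> c t m" for t m
    unfolding c_def by (simp add: alive_dist_nonneg stop_prob_bounds(1) valid)
  have partial_le_1: "(\<Sum>t<n. \<Sum>m\<in>UNIV. c t m) \<le> 1" for n
    using sum_stopped_eq[of \<pi> f g \<sigma> \<theta> n] sum_nonneg[OF alive_dist_nonneg[OF valid]]
    unfolding c_def by fastforce
  have c_summable: "summable (\<lambda>t. c t m)" for m
  proof (rule summableI_nonneg_bounded[where x = 1])
    show "(\<Sum>t<n. c t m) \<le> 1" for n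
      using partial_le_1[of n] sum_mono[of "{..<n}" "\<lambda>t. c t m" "\<lambda>t. \<Sum>m\<in>UNIV. c t m"]
      by (simp add: member_le_sum c_nonneg)
  qed (rule c_nonneg)
  have "end_mass \<pi> f g \<sigma> \<theta> = (\<Sum>t. \<Sum>m\<in>UNIV. c t m)"
    unfolding end_mass_def end_prob_def c_def[symmetric] using c_summable by (simp add: suminf_sum)
  also have "\<dots> \<le> 1"
    using c_summable partial_le_1 by (intro suminf_le_const summable_sum) auto
  finally show ?thesis .
qed

lemma end_mass_eq_1_if_ends_surely:
  assumes "0 < p" "p < 1" and "valid_strategy \<sigma>" and "ends_surely p \<pi> f g \<sigma>"
  shows "end_mass \<pi> f g \<sigma> \<theta> = 1"
proof -
  have "end_mass \<pi> f g \<sigma> H \<le> 1" "end_mass \<pi> f g \<sigma> L \<le> 1"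
    using end_mass_le_1[OF assms(3)] by auto
  moreover have "p * end_mass \<pi> f g \<sigma> H + (1 - p) * end_mass \<pi> f g \<sigma> L = 1"
    using assms(4) by (simp add: ends_surely_def end_mass_def)
  ultimately have "end_mass \<pi> f g \<sigma> H = 1 \<and> end_mass \<pi> f g \<sigma> L = 1"
    using assms(1,2) by (smt (verit) mult_less_cancel_left_pos mult_cancel_left1)
  then show ?thesis
    by (cases \<theta>) simp_all
qed

theorem lemma1:
  fixes p :: real
    and \<pi> :: "theta \<Rightarrow> 's::finite pmf"
    and f :: "'m::finite \<Rightarrow> 's \<Rightarrow> 'm pmf"
    and g :: "'m pmf"
    and a :: "'m \<Rightarrow> real"
    and \<sigma> \<sigma>' :: "'m \<Rightarrow> theta \<Rightarrow> real"
  assumes "0 < p" and "p < 1"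
    and "\<forall>\<theta> s. pmf (\<pi> \<theta>) s > 0"
    and "\<pi> H \<noteq> \<pi> L"
    and "\<forall>m. 0 \<le> a m \<and> a m \<le> 1"
    and "\<sigma> \<in> br p \<pi> f g a" and "\<sigma>' \<in> br p \<pi> f g a"
    and "ends_surely p \<pi> f g \<sigma>" and "ends_surely p \<pi> f g \<sigma>'"
  shows "U_R p \<pi> f g a \<sigma> = U_R p \<pi> f g a \<sigma>'"
proof -
  have "valid_strategy \<sigma>" "valid_strategy \<sigma>'"
    using assms(6,7) by (simp_all add: br_def)
  then have "end_mass \<pi> f g \<sigma> L = end_mass \<pi> f g \<sigma>' L"
    using end_mass_eq_1_if_ends_surely assms(1,2,8,9) by metis
  moreover have "sender_payoff \<pi> f g a \<sigma> \<theta> = sender_payoff \<pi> f g a \<sigma>' \<theta>" for \<theta>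
    using sender_payoff_br_eq assms(1,2,6,7) by blast
  ultimately show ?thesis
    by (simp add: U_R_eq_sender_payoff)
qed

end
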